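(* If $X$ is an (infinite) $T_1$-space, then $\psi(X)\le nu_s(X)\cdot 2^{s(X)}$.
   Context: For a space $X$ and $A\subseteq X$, the $\theta$-closure of $A$ is $\mathrm{cl}_\theta(A):=\{y\in X:\ \overline{B}\cap A\neq\emptyset$ for every open neighborhood $B$ of $y\}$. The non-Urysohn number of $X$ with respect to singletons is $nu_s(X):=1+\sup\{|\mathrm{cl}_\theta(\{x\})|:x\in X\}$. $s(X)$ denotes the spread of $X$ (supremum of cardinalities of discrete subspaces, plus $\omega$) and $\psi(X)$ the pseudocharacter of $X$ (the supremum over $x\in X$ of the minimal cardinality of a family of open sets whose intersection is $\{x\}$). Throughout, "space" means infinite topological space. *)

theory Defs
  imports "HOL-Analysis.Analysis"
begin

unbundle cardinal_syntax

definition theta_closure :: "'a topology \<Rightarrow> 'a set \<Rightarrow> 'a set" where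
  "theta_closure X A = {y \<in> topspace X. \<forall>B. openin X B \<and> y \<in> B \<longrightarrow> (X closure_of B) \<inter> A \<noteq> {}}"

definition is_card_sup :: "'a set set \<Rightarrow> 'a set \<Rightarrow> bool" where
  "is_card_sup F S \<longleftrightarrow> (\<forall>A\<in>F. (card_of A) \<le>o (card_of S)) \<and> (\<forall>T::'a set. (\<forall>A\<in>F. (card_of A) \<le>o (card_of T)) \<longrightarrow> (card_of S) \<le>o (card_of T))"

definition discrete_subspace :: "'a topology \<Rightarrow> 'a set \<Rightarrow> bool" where
  "discrete_subspace X D \<longleftrightarrow> D \<subseteq> topspace X \<and> subtopology X D = discrete_topology D"

definition spread :: "'a topology \<Rightarrow> ('a + nat) rel" where
  "spread X = card_of (SOME S. is_card_sup {D. discrete_subspace X D} S) +c natLeq"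

definition nu_s :: "'a topology \<Rightarrow> (unit + 'a) rel" where
  "nu_s X = cone +c card_of (SOME N. is_card_sup {theta_closure X {x} | x. x \<in> topspace X} N)"

end

theory Submission
  imports Defs
begin

text \<open>
  Fix \<open>x\<close> and let \<open>C\<close> be the \<open>\<theta>\<close>-closure of \<open>{x}\<close>. Every \<open>y \<notin> C\<close> has an open
  neighbourhood \<open>U y\<close> whose closure misses \<open>x\<close>. Shapiro's lemma gives a discrete \<open>A\<close> with
  \<open>X - C \<subseteq> cl A \<union> \<Union>(U ` A)\<close>. The complements of the points of \<open>C - {x}\<close> (closed by \<open>T\<^sub>1\<close>),
  of the closures \<open>cl B\<close> for \<open>B \<subseteq> A\<close> with \<open>x \<notin> cl B\<close>, and of the closures \<open>cl (U p)\<close> for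
  \<open>p \<in> A\<close> are open sets containing \<open>x\<close>; a point \<open>z \<noteq> x\<close> is excluded by the first kind if
  \<open>z \<in> C\<close>, by \<open>cl (A \<inter> U z)\<close> if \<open>z \<in> cl A\<close>, and by \<open>cl (U p)\<close> if \<open>z \<in> U p\<close>. There are at most
  \<open>|C| + 2\<^bsup>|A|\<^esup> \<le> nu\<^sub>s(X) \<cdot> 2\<^bsup>s(X)\<^esup>\<close> of them.
\<close>

lemma exists_is_card_sup: "\<exists>S. is_card_sup F S"
proof -
  let ?Q = "{|T| | T::'a set. \<forall>A\<in>F. |A| \<le>o |T|}"
  have "\<forall>A\<in>F. |A| \<le>o |UNIV::'a set|"
    by (intro ballI card_of_mono1 subset_UNIV)
  then have "|UNIV::'a set| \<in> ?Q"
    unfolding mem_Collect_eq by (intro exI[of _ UNIV] conjI refl)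
  then have nonempty: "?Q \<noteq> {}" by (metis empty_iff)
  have "\<forall>r\<in>?Q. Well_order r" using card_of_Well_order by blast
  then obtain m where m: "m \<in> ?Q" and min: "\<forall>r\<in>?Q. m \<le>o r"
    using exists_minim_Well_order[OF nonempty] by blast
  obtain S where S: "m = |S|" "\<forall>A\<in>F. |A| \<le>o |S|" using m by blast
  have "is_card_sup F S"
    unfolding is_card_sup_def
  proof (intro conjI allI impI)
    show "\<forall>A\<in>F. |A| \<le>o |S|" by (fact S(2))
    fix T :: "'a set" assume "\<forall>A\<in>F. |A| \<le>o |T|"
    then have "|T| \<in> ?Q"
      unfolding mem_Collect_eq by (intro exI[of _ T] conjI refl)
    then have "m \<le>o |T|" using min by (rule_tac bspec)
    then show "|S| \<le>o |T|" using S(1) by simp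
  qed
  then show ?thesis ..
qed

lemma card_of_le_card_sup: "is_card_sup F S \<Longrightarrow> A \<in> F \<Longrightarrow> |A| \<le>o |S|"
  unfolding is_card_sup_def by blast

lemma card_of_theta_closure_le_nu_s:
  assumes "x \<in> topspace X"
  shows "|theta_closure X {x}| \<le>o nu_s X"
proof -
  define N where "N = (SOME N. is_card_sup {theta_closure X {x} | x. x \<in> topspace X} N)"
  have "is_card_sup {theta_closure X {x} | x. x \<in> topspace X} N"
    unfolding N_def by (rule someI_ex[OF exists_is_card_sup])
  then have "|theta_closure X {x}| \<le>o |N|"
    by (rule card_of_le_card_sup) (use assms in blast)
  also have "|N| \<le>o nu_s X"
    unfolding nu_s_def N_def[symmetric] by (rule ordLeq_csum2[OF card_of_Card_order])
  finally show ?thesis .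
qed

lemma card_of_discrete_subspace_le_spread:
  assumes "discrete_subspace X D"
  shows "|D| \<le>o spread X"
proof -
  define S where "S = (SOME S. is_card_sup {D. discrete_subspace X D} S)"
  have "is_card_sup {D. discrete_subspace X D} S"
    unfolding S_def by (rule someI_ex[OF exists_is_card_sup])
  then have "|D| \<le>o |S|"
    by (rule card_of_le_card_sup) (use assms in simp)
  also have "|S| \<le>o spread X"
    unfolding spread_def S_def[symmetric] by (rule ordLeq_csum1[OF card_of_Card_order])
  finally show ?thesis .
qed

lemma Cinfinite_spread: "Cinfinite (spread X)"
  unfolding spread_def by (rule Cinfinite_csum) (simp add: natLeq_Cinfinite)

lemma Cinfinite_ctwo_cexp_spread: "Cinfinite (ctwo ^c spread X)"
  by (rule Cinfinite_cexp[OF ordLeq_refl[OF Card_order_ctwo] Cinfinite_spread])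

lemma Cnotzero_nu_s: "Cnotzero (nu_s X)"
  unfolding nu_s_def
  by (rule Cnotzero_mono[OF _ Card_order_csum ordLeq_csum1[OF Card_order_cone]])
     (simp add: Card_order_cone cone_not_czero)

lemma nu_s_le_cprod: "nu_s X \<le>o nu_s X *c (ctwo ^c spread X)"
  using ordLeq_cprod2[OF Cinfinite_Cnotzero[OF Cinfinite_ctwo_cexp_spread] Cnotzero_nu_s[THEN conjunct2]]
    cprod_com
  by (rule ordLeq_ordIso_trans)

lemma card_of_Pow_le_ctwo_cexp:
  assumes "|A| \<le>o r" and "Cinfinite r"
  shows "|Pow A| \<le>o ctwo ^c r"
proof (cases "A = {}")
  case True
  have "Cinfinite (ctwo ^c r)"
    by (rule Cinfinite_cexp[OF ordLeq_refl[OF Card_order_ctwo] assms(2)])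
  then have "|Pow A| <o ctwo ^c r"
    using True by (intro finite_ordLess_infinite[OF card_of_Well_order])
      (auto simp: Field_card_of cinfinite_def intro: card_order_on_well_order_on)
  then show ?thesis by (rule ordLess_imp_ordLeq)
next
  case False
  have "|Pow A| =o ctwo ^c |A|" by (simp add: card_of_Pow_Func cexp_def ctwo_def Field_card_of)
  also have "ctwo ^c |A| \<le>o ctwo ^c r"
    by (rule cexp_mono2'[OF assms(1) Card_order_ctwo]) (use False in \<open>simp add: Field_card_of\<close>)
  finally show ?thesis .
qed

lemma wf_exists_set_rec:
  assumes "wf R"
  shows "\<exists>A. \<forall>p. p \<in> A \<longleftrightarrow> P {q \<in> A. (q, p) \<in> R} p"
proof -
  define g where "g = wfrec R (\<lambda>h p. P {q. (q, p) \<in> R \<and> h q} p)"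
  define A where "A = {p. g p}"
  have "p \<in> A \<longleftrightarrow> P {q \<in> A. (q, p) \<in> R} p" for p
  proof -
    have "p \<in> A \<longleftrightarrow> P {q. (q, p) \<in> R \<and> cut g R p q} p"
      unfolding A_def mem_Collect_eq g_def by (rule wfrec[OF assms])
    also have "{q. (q, p) \<in> R \<and> cut g R p q} = {q \<in> A. (q, p) \<in> R}"
      by (auto simp: cut_apply A_def)
    finally show ?thesis .
  qed
  then show ?thesis by blast
qed

lemma exists_wf_total_rel: "\<exists>R::'a rel. wf R \<and> (\<forall>p q. p \<noteq> q \<longrightarrow> (p, q) \<in> R \<or> (q, p) \<in> R)"
proof -
  obtain r :: "'a rel" where r: "Well_order r" "Field r = UNIV"
    using well_ordering by metis
  have "wf (r - Id)"
    using r unfolding well_order_on_def by simp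
  moreover have "total_on UNIV r"
    using r unfolding well_order_on_def linear_order_on_def by simp
  then have "\<forall>p q. p \<noteq> q \<longrightarrow> (p, q) \<in> r - Id \<or> (q, p) \<in> r - Id"
    unfolding total_on_def by blast
  ultimately show ?thesis by (intro exI[of _ "r - Id"] conjI)
qed

text \<open>
  \<open>A\<close> is chosen greedily along \<open>R\<close>: a point is taken iff it is not yet covered by the
  closure of, or the neighbourhoods of, the points taken before it.
\<close>
lemma greedy_discrete_subspace:
  assumes A: "A \<subseteq> topspace X" and U: "\<forall>p\<in>A. openin X (U p) \<and> p \<in> U p"
    and total: "\<forall>p q. p \<noteq> q \<longrightarrow> (p, q) \<in> R \<or> (q, p) \<in> R"
    and greedy: "\<forall>p\<in>A. p \<notin> X closure_of {q \<in> A. (q, p) \<in> R} \<union> \<Union>(U ` {q \<in> A. (q, p) \<in> R})"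
  shows "discrete_subspace X A"
  unfolding discrete_subspace_def
proof
  show "A \<subseteq> topspace X" by (fact A)
  show "subtopology X A = discrete_topology A"
  proof (rule sym, subst discrete_topology_unique, intro conjI ballI)
    show "topspace (subtopology X A) = A" using A by auto
    fix p assume p: "p \<in> A"
    define P where "P = {q \<in> A. (q, p) \<in> R}"
    define W where "W = U p - X closure_of P"
    have "openin X W"
      unfolding W_def using U p by (blast intro: closedin_closure_of)
    moreover have "W \<inter> A = {p}"
    proof (intro equalityI subsetI)
      fix q assume q: "q \<in> W \<inter> A"
      have "(q, p) \<notin> R"
        using q A closure_of_subset[of P X] unfolding W_def P_def by blast
      moreover have "(p, q) \<notin> R"
        using q p greedy unfolding W_def by blast
      ultimately show "q \<in> {p}" using total by blast
    qed (use p U greedy in \<open>auto simp: W_def P_def\<close>)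
    ultimately show "openin (subtopology X A) {p}"
      using openin_subtopology by blast
  qed
qed

lemma shapiro_discrete_cover:
  assumes Y: "Y \<subseteq> topspace X" and U: "\<forall>p\<in>Y. openin X (U p) \<and> p \<in> U p"
  shows "\<exists>A\<subseteq>Y. discrete_subspace X A \<and> Y \<subseteq> X closure_of A \<union> \<Union>(U ` A)"
proof -
  obtain R :: "'a rel" where R: "wf R" and total: "\<forall>p q. p \<noteq> q \<longrightarrow> (p, q) \<in> R \<or> (q, p) \<in> R"
    using exists_wf_total_rel by metis
  obtain A where A: "\<forall>p. p \<in> A \<longleftrightarrow> p \<in> Y \<and>
      p \<notin> X closure_of {q \<in> A. (q, p) \<in> R} \<union> \<Union>(U ` {q \<in> A. (q, p) \<in> R})"
    using wf_exists_set_rec[OF R, of "\<lambda>B p. p \<in> Y \<and> p \<notin> X closure_of B \<union> \<Union>(U ` B)"]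
    by (elim exE)
  have "A \<subseteq> Y" using A by blast
  moreover have "discrete_subspace X A"
  proof (rule greedy_discrete_subspace[OF _ _ total])
    show "A \<subseteq> topspace X" using \<open>A \<subseteq> Y\<close> Y by blast
    show "\<forall>p\<in>A. openin X (U p) \<and> p \<in> U p" using \<open>A \<subseteq> Y\<close> U by blast
    show "\<forall>p\<in>A. p \<notin> X closure_of {q \<in> A. (q, p) \<in> R} \<union> \<Union>(U ` {q \<in> A. (q, p) \<in> R})"
      using A by blast
  qed
  moreover have "Y \<subseteq> X closure_of A \<union> \<Union>(U ` A)"
  proof
    fix p assume p: "p \<in> Y"
    have "X closure_of {q \<in> A. (q, p) \<in> R} \<subseteq> X closure_of A"
      by (rule closure_of_mono) blast
    then show "p \<in> X closure_of A \<union> \<Union>(U ` A)"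
      using A p U by blast
  qed
  ultimately show ?thesis by blast
qed

definition theta_pseudobase :: "'a topology \<Rightarrow> 'a \<Rightarrow> ('a \<Rightarrow> 'a set) \<Rightarrow> 'a set \<Rightarrow> 'a set set" where
  "theta_pseudobase X x U A =
     (\<lambda>c. topspace X - {c}) ` (theta_closure X {x} - {x})
     \<union> (\<lambda>B. topspace X - X closure_of B) ` {B. B \<subseteq> A \<and> x \<notin> X closure_of B}
     \<union> (\<lambda>p. topspace X - X closure_of (U p)) ` A"

lemma openin_theta_pseudobase:
  assumes "t1_space X" and "V \<in> theta_pseudobase X x U A"
  shows "openin X V"
proof -
  have "theta_closure X {x} \<subseteq> topspace X"
    unfolding theta_closure_def by blast
  then show ?thesis
    using assms closedin_t1_singleton[OF assms(1)]
    unfolding theta_pseudobase_def by (blast intro: closedin_closure_of)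
qed

lemma Inter_theta_pseudobase:
  assumes x: "x \<in> topspace X"
    and U: "\<forall>y\<in>topspace X - theta_closure X {x}.
              openin X (U y) \<and> y \<in> U y \<and> x \<notin> X closure_of U y"
    and A: "A \<subseteq> topspace X - theta_closure X {x}"
    and cover: "topspace X - theta_closure X {x} \<subseteq> X closure_of A \<union> \<Union>(U ` A)"
  shows "\<Inter>(theta_pseudobase X x U A) = {x}"
proof (intro equalityI subsetI)
  fix y assume "y \<in> {x}"
  then show "y \<in> \<Inter>(theta_pseudobase X x U A)"
    using x U A unfolding theta_pseudobase_def by blast
next
  fix z assume z: "z \<in> \<Inter>(theta_pseudobase X x U A)"
  have "topspace X \<in> theta_pseudobase X x U A"
    unfolding theta_pseudobase_def by (intro UnI1 UnI2 image_eqI[where x="{}"]) auto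
  then have zX: "z \<in> topspace X" using z by blast
  show "z \<in> {x}"
  proof (rule ccontr)
    assume zx: "z \<notin> {x}"
    consider "z \<in> theta_closure X {x}" | "z \<in> X closure_of A - theta_closure X {x}"
      | p where "p \<in> A" "z \<in> U p"
      using cover zX by blast
    then show False
    proof cases
      case 1
      then have "topspace X - {z} \<in> theta_pseudobase X x U A"
        using zx unfolding theta_pseudobase_def by blast
      then show False using z by blast
    next
      case 2
      with zX U have Uz: "openin X (U z)" "z \<in> U z" "x \<notin> X closure_of U z" by auto
      then have "z \<in> X closure_of (U z \<inter> A)"
        using 2 openin_Int_closure_of_subset[of X "U z" A] by blast
      moreover have "x \<notin> X closure_of (U z \<inter> A)"
        using Uz closure_of_mono[of "U z \<inter> A" "U z" X] by blast
      then have "topspace X - X closure_of (U z \<inter> A) \<in> theta_pseudobase X x U A"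
        unfolding theta_pseudobase_def by blast
      ultimately show False using z by blast
    next
      case 3
      then have "openin X (U p)" using U A by blast
      then have "z \<in> X closure_of U p"
        using 3 closure_of_subset[OF openin_subset] by blast
      moreover have "topspace X - X closure_of U p \<in> theta_pseudobase X x U A"
        using 3 unfolding theta_pseudobase_def by blast
      ultimately show False using z by blast
    qed
  qed
qed

lemma card_of_theta_pseudobase_le:
  assumes "Cinfinite r" and "|theta_closure X {x}| \<le>o r" and "|Pow A| \<le>o r"
  shows "|theta_pseudobase X x U A| \<le>o r"
proof -
  have infinite: "\<not> finite (Field r)" and card: "Card_order r"
    using assms(1) by (simp_all add: cinfinite_def)
  have "|(\<lambda>c. topspace X - {c}) ` (theta_closure X {x} - {x})| \<le>o r"
    using card_of_image card_of_mono1[of "theta_closure X {x} - {x}"] assms(2)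
    by (blast intro: ordLeq_transitive)
  moreover have "|(\<lambda>B. topspace X - X closure_of B) ` {B. B \<subseteq> A \<and> x \<notin> X closure_of B}| \<le>o r"
    using card_of_image card_of_mono1[of "{B. B \<subseteq> A \<and> x \<notin> X closure_of B}" "Pow A"] assms(3)
    by (blast intro: ordLeq_transitive)
  moreover have "|(\<lambda>p. topspace X - X closure_of (U p)) ` A| \<le>o r"
    using card_of_image ordLess_imp_ordLeq[OF card_of_Pow[of A]] assms(3)
    by (blast intro: ordLeq_transitive)
  ultimately show ?thesis
    unfolding theta_pseudobase_def
    by (intro card_of_Un_ordLeq_infinite_Field infinite card)
qed

theorem lemma3p9:
  fixes X :: "'a topology"
  assumes "infinite (topspace X)" and "t1_space X"
  shows "\<forall>x\<in>topspace X. \<exists>\<U>. (\<forall>U\<in>\<U>. openin X U) \<and> \<Inter>\<U> = {x}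
           \<and> (card_of \<U>) \<le>o nu_s X *c (ctwo ^c spread X)"
proof
  fix x assume x: "x \<in> topspace X"
  let ?Y = "topspace X - theta_closure X {x}"
  let ?K = "nu_s X *c (ctwo ^c spread X)"
  have "\<forall>y\<in>?Y. \<exists>B. openin X B \<and> y \<in> B \<and> x \<notin> X closure_of B"
    unfolding theta_closure_def by blast
  then obtain U where U: "\<forall>y\<in>?Y. openin X (U y) \<and> y \<in> U y \<and> x \<notin> X closure_of U y"
    by (rule bchoice[THEN exE])
  then have "\<forall>y\<in>?Y. openin X (U y) \<and> y \<in> U y" by blast
  then obtain A where A: "A \<subseteq> ?Y" "discrete_subspace X A" "?Y \<subseteq> X closure_of A \<union> \<Union>(U ` A)"
    using shapiro_discrete_cover[of ?Y X U] by blast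
  have theta: "|theta_closure X {x}| \<le>o ?K"
    using card_of_theta_closure_le_nu_s[OF x] nu_s_le_cprod by (rule ordLeq_transitive)
  have Pow: "|Pow A| \<le>o ?K"
    using card_of_Pow_le_ctwo_cexp[OF card_of_discrete_subspace_le_spread[OF A(2)] Cinfinite_spread]
      ordLeq_cprod2[OF Cnotzero_nu_s Card_order_cexp] by (rule ordLeq_transitive)
  show "\<exists>\<U>. (\<forall>U\<in>\<U>. openin X U) \<and> \<Inter>\<U> = {x} \<and> |\<U>| \<le>o ?K"
  proof (intro exI conjI)
    show "\<forall>V\<in>theta_pseudobase X x U A. openin X V"
      using openin_theta_pseudobase[OF assms(2)] by blast
    show "\<Inter>(theta_pseudobase X x U A) = {x}"
      by (rule Inter_theta_pseudobase[OF x U A(1,3)])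
    show "|theta_pseudobase X x U A| \<le>o ?K"
      by (rule card_of_theta_pseudobase_le[OF Cinfinite_cprod2[OF Cnotzero_nu_s Cinfinite_ctwo_cexp_spread] theta Pow])
  qed
qed

end
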